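(* For all integers $N\ge2$ and all $s\in(\frac12,1)$, setting $\gamma:=1+\frac2{N-2s}$, there exists a sequence of functions $U_n\in C^\infty_c(\mathbb{R}^N\times(0,+\infty),[0,1])$ such that $$\lim_{n\to+\infty}\frac{\Big(\int_{\mathbb{R}^N\times(0,+\infty)}y^{1-2s}|U_n(x,y)|^{2\gamma}\,dx\,dy\Big)^{\frac1{2\gamma}}}{\Big(\int_{\mathbb{R}^N\times(0,+\infty)}y^{1-2s}|\nabla U_n(x,y)|^2\,dx\,dy\Big)^{\frac12}}=+\infty.$$ *)

theory Defs
  imports "HOL-Analysis.Analysis"
begin

fun C_k_on :: "nat \<Rightarrow> 'a::euclidean_space set \<Rightarrow> ('a \<Rightarrow> real) \<Rightarrow> bool" where
  "C_k_on 0 S f = continuous_on S f"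
| "C_k_on (Suc k) S f = (continuous_on S f \<and> f differentiable_on S \<and>
     (\<forall>b\<in>Basis. C_k_on k S (\<lambda>x. frechet_derivative f (at x) b)))"

definition smooth_on :: "'a::euclidean_space set \<Rightarrow> ('a \<Rightarrow> real) \<Rightarrow> bool" where
  "smooth_on S f \<longleftrightarrow> (\<forall>k. C_k_on k S f)"

definition Cc_infty_01 :: "'a::euclidean_space set \<Rightarrow> ('a \<Rightarrow> real) \<Rightarrow> bool" where
  "Cc_infty_01 S f \<longleftrightarrow> smooth_on S f \<and> compact (closure {z. f z \<noteq> 0})
     \<and> closure {z. f z \<noteq> 0} \<subseteq> S \<and> (\<forall>z\<in>S. f z \<in> {0..1})"

definition grad :: "('a::euclidean_space \<Rightarrow> real) \<Rightarrow> 'a \<Rightarrow> 'a" where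
  "grad f z = (\<Sum>b\<in>Basis. frechet_derivative f (at z) b *\<^sub>R b)"

definition half_space :: "((real^'n) \<times> real) set" where
  "half_space = {z. snd z > 0}"

end

theory Submission
  imports Defs "HOL-Computational_Algebra.Polynomial" "HOL-Real_Asymp.Real_Asymp"
begin

text \<open>Take bumps \<open>U\<^sub>r(z) = exp (-1 / (1 - |z - (0,1)|\<^sup>2 / r\<^sup>2))\<close> supported in the ball of
  radius \<open>r\<close> around \<open>(0, 1)\<close>. Near height \<open>y = 1\<close> the weight \<open>y\<^sup>1\<^sup>-\<^sup>2\<^sup>s\<close> lies between two
  constants, so with \<open>D = N + 1\<close> the numerator integral is at least \<open>c r\<^sup>D\<close> while the weighted
  Dirichlet integral is at most \<open>C r\<^sup>D\<^sup>-\<^sup>2\<close>. The quotient is therefore at least a constant times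
  \<open>r\<^sup>-\<^sup>e\<close> with \<open>e = (D - 2)/2 - D/(2\<gamma>) = (2s - 1)/(N - 2s + 2) > 0\<close>: the exponent \<open>2\<gamma>\<close> is
  supercritical for the Sobolev embedding in dimension \<open>D\<close>. Letting \<open>r = 1/(n + 2)\<close> tend to \<open>0\<close>
  gives the claim.\<close>

section \<open>Calculus of \<open>C_k_on\<close>\<close>

lemma C_k_on_cong:
  assumes "open S" "\<And>x. x \<in> S \<Longrightarrow> f x = g x"
  shows "C_k_on k S f = C_k_on k S g"
  using assms(2)
proof (induction k arbitrary: f g)
  case 0
  then show ?case using continuous_on_cong by force
next
  case (Suc k)
  have deriv_iff: "(f has_derivative D) (at x) \<longleftrightarrow> (g has_derivative D) (at x)" if "x \<in> S" for x D
    using has_derivative_transform_within_open[OF _ assms(1) that, of f D UNIV g]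
      has_derivative_transform_within_open[OF _ assms(1) that, of g D UNIV f] Suc.prems
    by auto
  have "frechet_derivative f (at x) = frechet_derivative g (at x)" if "x \<in> S" for x
    unfolding frechet_derivative_def using deriv_iff[OF that] by simp
  then have "C_k_on k S (\<lambda>x. frechet_derivative f (at x) b) = C_k_on k S (\<lambda>x. frechet_derivative g (at x) b)" for b
    using Suc.IH[of "\<lambda>x. frechet_derivative f (at x) b" "\<lambda>x. frechet_derivative g (at x) b"] by simp
  moreover have "f differentiable_on S \<longleftrightarrow> g differentiable_on S"
    using deriv_iff assms(1) by (auto simp: differentiable_on_eq_differentiable_at differentiable_def)
  moreover have "continuous_on S f \<longleftrightarrow> continuous_on S g"
    using Suc.prems continuous_on_cong by force
  ultimately show ?case by simp
qed

lemma C_k_on_SucI: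
  assumes "open S" "\<And>x. x \<in> S \<Longrightarrow> (f has_derivative f' x) (at x)"
    "\<And>b. b \<in> Basis \<Longrightarrow> C_k_on k S (\<lambda>x. f' x b)"
  shows "C_k_on (Suc k) S f"
proof -
  have "continuous_on S f"
    using assms(2) has_derivative_continuous continuous_at_imp_continuous_on by blast
  moreover have "f differentiable_on S"
    using assms(2) differentiableI differentiable_at_imp_differentiable_on by blast
  moreover have "C_k_on k S (\<lambda>x. frechet_derivative f (at x) b)" if "b \<in> Basis" for b
    using C_k_on_cong[OF assms(1), of "\<lambda>x. frechet_derivative f (at x) b" "\<lambda>x. f' x b"] assms(3)[OF that]
    by (simp add: frechet_derivative_at[OF assms(2)])
  ultimately show ?thesis by simp
qed

lemma has_derivative_if_C_k_on_Suc:
  assumes "open S" "C_k_on (Suc k) S f" "x \<in> S"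
  shows "(f has_derivative frechet_derivative f (at x)) (at x)"
  using assms by (auto simp: differentiable_on_eq_differentiable_at frechet_derivative_works[symmetric])

lemma C_k_on_Suc_imp_C_k_on: "C_k_on (Suc k) S f \<Longrightarrow> C_k_on k S f"
  by (induction k arbitrary: f) auto

lemma C_k_on_const: "open S \<Longrightarrow> C_k_on k S (\<lambda>x. c)"
proof (induction k arbitrary: c)
  case (Suc k)
  then show ?case by (intro C_k_on_SucI[where f' = "\<lambda>x h. 0"]) auto
qed simp

lemma C_k_on_add:
  "open S \<Longrightarrow> C_k_on k S f \<Longrightarrow> C_k_on k S g \<Longrightarrow> C_k_on k S (\<lambda>x. f x + g x)"
proof (induction k arbitrary: f g)
  case (Suc k)
  show ?case
  proof (rule C_k_on_SucI[OF Suc.prems(1)])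
    show "((\<lambda>x. f x + g x) has_derivative
        (\<lambda>h. frechet_derivative f (at x) h + frechet_derivative g (at x) h)) (at x)" if "x \<in> S" for x
      using Suc.prems that by (intro has_derivative_add has_derivative_if_C_k_on_Suc)
    show "C_k_on k S (\<lambda>x. frechet_derivative f (at x) b + frechet_derivative g (at x) b)"
      if "b \<in> Basis" for b
      using Suc.prems that by (intro Suc.IH) simp_all
  qed
qed (auto intro: continuous_on_add)

lemma C_k_on_mult:
  "open S \<Longrightarrow> C_k_on k S f \<Longrightarrow> C_k_on k S g \<Longrightarrow> C_k_on k S (\<lambda>x. f x * g x)"
proof (induction k arbitrary: f g)
  case (Suc k)
  show ?case
  proof (rule C_k_on_SucI[OF Suc.prems(1)])
    show "((\<lambda>x. f x * g x) has_derivative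
        (\<lambda>h. f x * frechet_derivative g (at x) h + frechet_derivative f (at x) h * g x)) (at x)"
      if "x \<in> S" for x
      using Suc.prems that by (intro has_derivative_mult has_derivative_if_C_k_on_Suc)
    show "C_k_on k S (\<lambda>x. f x * frechet_derivative g (at x) b + frechet_derivative f (at x) b * g x)"
      if "b \<in> Basis" for b
      using Suc.prems that C_k_on_Suc_imp_C_k_on[OF Suc.prems(2)] C_k_on_Suc_imp_C_k_on[OF Suc.prems(3)]
      by (intro C_k_on_add Suc.IH) simp_all
  qed
qed (auto intro: continuous_on_mult)

lemma C_k_on_compose:
  fixes g :: "real \<Rightarrow> real"
  assumes "open S" "\<And>k. C_k_on k UNIV g" "C_k_on k S f"
  shows "C_k_on k S (\<lambda>x. g (f x))"
  using assms(2,3)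
proof (induction k arbitrary: f g)
  case 0
  have "continuous_on UNIV g" using "0.prems"(1)[of 0] by simp
  then show ?case using continuous_on_compose2[of UNIV g S f] "0.prems"(2) by simp
next
  case (Suc k)
  define g' where "g' = (\<lambda>t. frechet_derivative g (at t) 1)"
  have g_deriv: "(g has_derivative frechet_derivative g (at t)) (at t)" for t
    using has_derivative_if_C_k_on_Suc[of UNIV 0 g t] Suc.prems(1) by auto
  have g'_scale: "frechet_derivative g (at t) c = c * g' t" for t c
  proof -
    have "frechet_derivative g (at t) (c *\<^sub>R 1) = c *\<^sub>R frechet_derivative g (at t) 1"
      by (rule linear_scale[OF has_derivative_linear[OF g_deriv]])
    then show ?thesis by (simp add: g'_def)
  qed
  show ?case
  proof (rule C_k_on_SucI[OF assms(1)])
    show "((\<lambda>x. g (f x)) has_derivative (\<lambda>h. frechet_derivative f (at x) h * g' (f x))) (at x)"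
      if "x \<in> S" for x
      using diff_chain_at[OF has_derivative_if_C_k_on_Suc[OF assms(1) Suc.prems(2) that] g_deriv]
      by (simp add: o_def g'_scale)
    have g'_smooth: "C_k_on k UNIV g'" for k
      using Suc.prems(1)[of "Suc k"] by (simp add: g'_def)
    show "C_k_on k S (\<lambda>x. frechet_derivative f (at x) b * g' (f x))" if "b \<in> Basis" for b
    proof (rule C_k_on_mult[OF assms(1)])
      show "C_k_on k S (\<lambda>x. frechet_derivative f (at x) b)"
        using Suc.prems(2) that by simp
      show "C_k_on k S (\<lambda>x. g' (f x))"
        by (rule Suc.IH[OF g'_smooth C_k_on_Suc_imp_C_k_on[OF Suc.prems(2)]])
    qed
  qed
qed

section \<open>A smooth function flat at zero, and bumps\<close>

text \<open>With \<open>u = 1/t\<close>, the derivative of \<open>P(u) e\<^sup>-\<^sup>u\<close> is \<open>u\<^sup>2 (P(u) - P'(u)) e\<^sup>-\<^sup>u\<close>, so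
  the family is closed under differentiation; every member is flat at \<open>0\<close> because
  \<open>e\<^sup>-\<^sup>u\<close> beats every polynomial in \<open>u\<close>.\<close>

definition poly_exp_inv :: "real poly \<Rightarrow> real \<Rightarrow> real" where
  "poly_exp_inv P t = (if 0 < t then poly P (inverse t) * exp (- inverse t) else 0)"

definition pderiv_exp_inv :: "real poly \<Rightarrow> real poly" where
  "pderiv_exp_inv P = pCons 0 (pCons 0 (P - pderiv P))"

lemma poly_times_exp_minus_tendsto_0:
  fixes P :: "real poly"
  shows "((\<lambda>x. poly P x * exp (- x)) \<longlongrightarrow> 0) at_top"
proof -
  have expand: "poly P x * exp (- x) = (\<Sum>i\<le>degree P. coeff P i * (x ^ i / exp x))" for x :: real
    by (simp add: exp_minus poly_altdef sum_divide_distrib field_simps)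
  have "((\<lambda>x. \<Sum>i\<le>degree P. coeff P i * (x ^ i / exp x)) \<longlongrightarrow> (\<Sum>i\<le>degree P. coeff P i * 0)) at_top"
    by (intro tendsto_intros tendsto_power_div_exp_0)
  then show ?thesis by (simp add: expand)
qed

lemma poly_exp_inv_has_real_derivative:
  "(poly_exp_inv P has_real_derivative poly_exp_inv (pderiv_exp_inv P) t) (at t)"
proof (cases t "0 :: real" rule: linorder_cases)
  case greater
  have "((\<lambda>t. poly P (inverse t) * exp (- inverse t)) has_real_derivative
      poly_exp_inv (pderiv_exp_inv P) t) (at t)"
    using greater
    by (auto intro!: derivative_eq_intros
        simp: poly_exp_inv_def pderiv_exp_inv_def algebra_simps power2_eq_square)
  then show ?thesis
    by (rule has_field_derivative_transform_within_open[OF _ open_greaterThan[of 0]])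
      (use greater in \<open>auto simp: poly_exp_inv_def\<close>)
next
  case less
  have "((\<lambda>t. 0) has_real_derivative 0) (at t)" by simp
  then have "(poly_exp_inv P has_real_derivative 0) (at t)"
    by (rule has_field_derivative_transform_within_open[OF _ open_lessThan[of 0]])
      (use less in \<open>auto simp: poly_exp_inv_def\<close>)
  then show ?thesis
    using less by (simp add: poly_exp_inv_def)
next
  case equal
  have left: "((\<lambda>y. poly_exp_inv P y / y) \<longlongrightarrow> 0) (at_left 0)"
  proof (rule tendsto_eventually)
    have "\<forall>\<^sub>F y in at_left 0. y \<in> {-1<..<0::real}"
      by (rule eventually_at_left_real) simp
    then show "\<forall>\<^sub>F y in at_left 0. poly_exp_inv P y / y = 0"
      by eventually_elim (simp add: poly_exp_inv_def)
  qed
  have right: "((\<lambda>y. poly_exp_inv P y / y) \<longlongrightarrow> 0) (at_right 0)"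
    unfolding filterlim_at_right_to_top
  proof (rule Lim_transform_eventually[OF poly_times_exp_minus_tendsto_0[of "pCons 0 P"]])
    show "\<forall>\<^sub>F x in at_top. poly (pCons 0 P) x * exp (- x) = poly_exp_inv P (inverse x) / inverse x"
      using eventually_gt_at_top[of 0] by eventually_elim (simp add: poly_exp_inv_def field_simps)
  qed
  have "((\<lambda>y. (poly_exp_inv P y - poly_exp_inv P 0) / (y - 0)) \<longlongrightarrow> 0) (at 0)"
    using filterlim_split_at[OF left right] by (simp add: poly_exp_inv_def)
  then show ?thesis
    using equal by (simp add: has_field_derivative_iff poly_exp_inv_def)
qed

lemma C_k_on_poly_exp_inv: "C_k_on k UNIV (poly_exp_inv P)"
proof (induction k arbitrary: P)
  case 0
  show ?case
    using DERIV_continuous[OF poly_exp_inv_has_real_derivative]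
    by (simp add: continuous_at_imp_continuous_on)
next
  case (Suc k)
  show ?case
  proof (rule C_k_on_SucI[where f' = "\<lambda>t h. poly_exp_inv (pderiv_exp_inv P) t * h"])
    show "(poly_exp_inv P has_derivative (\<lambda>h. poly_exp_inv (pderiv_exp_inv P) t * h)) (at t)" for t
      using poly_exp_inv_has_real_derivative by (simp add: has_field_derivative_def)
  qed (use Suc.IH in \<open>simp_all add: Basis_real_def\<close>)
qed

lemma continuous_on_poly_exp_inv [continuous_intros]:
  "continuous_on S g \<Longrightarrow> continuous_on S (\<lambda>x. poly_exp_inv P (g x))"
  using continuous_on_compose2[OF continuous_at_imp_continuous_on
      [OF ballI[OF DERIV_continuous[OF poly_exp_inv_has_real_derivative]]]]
  by blast

lemma poly_exp_inv_1: "poly_exp_inv 1 t = (if 0 < t then exp (- inverse t) else 0)"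
  by (simp add: poly_exp_inv_def)

lemma poly_exp_inv_pderiv_1:
  "poly_exp_inv (pderiv_exp_inv 1) t = (if 0 < t then inverse t ^ 2 * exp (- inverse t) else 0)"
  by (simp add: poly_exp_inv_def pderiv_exp_inv_def power2_eq_square)

lemma square_times_exp_minus_le:
  fixes u :: real
  assumes "0 \<le> u"
  shows "u\<^sup>2 * exp (- u) \<le> 4"
proof -
  have "u / 2 \<le> exp (u / 2)"
    using exp_ge_add_one_self[of "u / 2"] by linarith
  then have "(u / 2)\<^sup>2 \<le> (exp (u / 2))\<^sup>2"
    using assms by (intro power_mono) auto
  then have "u\<^sup>2 \<le> 4 * exp u"
    by (simp add: power_divide exp_double[symmetric])
  then show ?thesis by (simp add: exp_minus field_simps)
qed

lemma poly_exp_inv_1_bounds: "0 \<le> poly_exp_inv 1 t" "poly_exp_inv 1 t \<le> 1"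
  by (auto simp: poly_exp_inv_1)

lemma poly_exp_inv_pderiv_1_bounds:
  "0 \<le> poly_exp_inv (pderiv_exp_inv 1) t" "poly_exp_inv (pderiv_exp_inv 1) t \<le> 4"
  using square_times_exp_minus_le[of "inverse t"] by (auto simp: poly_exp_inv_pderiv_1)

lemma poly_exp_inv_pderiv_1_ge:
  assumes "1/8 \<le> t" "t \<le> 1"
  shows "exp (-8) \<le> poly_exp_inv (pderiv_exp_inv 1) t"
proof -
  have u: "1 \<le> inverse t" "inverse t \<le> 8"
    using assms le_imp_inverse_le[OF assms(1)] by (auto simp: one_le_inverse_iff)
  have "exp (-8) \<le> exp (- inverse t)"
    using u by simp
  also have "\<dots> \<le> inverse t ^ 2 * exp (- inverse t)"
    using u by (simp add: one_le_power)
  finally show ?thesis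
    using assms by (simp add: poly_exp_inv_pderiv_1)
qed

definition bump :: "'a::euclidean_space \<Rightarrow> real \<Rightarrow> 'a \<Rightarrow> real" where
  "bump c r z = poly_exp_inv 1 (1 - ((z - c) \<bullet> (z - c)) / r\<^sup>2)"

lemma inner_self_divide_square: "x \<bullet> x / r\<^sup>2 = (norm x / r)\<^sup>2"
  by (simp add: power2_norm_eq_inner power_divide)

lemma has_derivative_bump_profile:
  "((\<lambda>z. 1 - ((z - c) \<bullet> (z - c)) / r\<^sup>2) has_derivative (\<lambda>h. - (2 / r\<^sup>2) * ((z - c) \<bullet> h))) (at z)"
  unfolding divide_inverse by (auto intro!: derivative_eq_intros simp: inner_commute algebra_simps)

lemma C_k_on_inner_diff: "open S \<Longrightarrow> C_k_on k S (\<lambda>z. (z - c) \<bullet> v)"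
proof (cases k)
  case (Suc k')
  assume "open S"
  then show ?thesis
    unfolding Suc
    by (intro C_k_on_SucI[where f' = "\<lambda>z h. h \<bullet> v"] C_k_on_const)
      (auto intro!: derivative_eq_intros)
qed (simp add: continuous_intros)

lemma C_k_on_bump: "open S \<Longrightarrow> C_k_on k S (bump c r)"
proof -
  assume S: "open S"
  have "C_k_on k S (\<lambda>z. 1 - ((z - c) \<bullet> (z - c)) / r\<^sup>2)"
  proof (cases k)
    case (Suc k')
    show ?thesis
      unfolding Suc
    proof (rule C_k_on_SucI[OF S has_derivative_bump_profile])
      show "C_k_on k' S (\<lambda>z. - (2 / r\<^sup>2) * ((z - c) \<bullet> b))" for b
        using S by (intro C_k_on_mult C_k_on_const C_k_on_inner_diff)
    qed
  qed (simp add: divide_inverse continuous_intros)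
  then show ?thesis
    unfolding bump_def[abs_def] by (rule C_k_on_compose[OF S C_k_on_poly_exp_inv])
qed

lemma has_derivative_bump:
  "(bump c r has_derivative
    (\<lambda>h. poly_exp_inv (pderiv_exp_inv 1) (1 - ((z - c) \<bullet> (z - c)) / r\<^sup>2) * (- (2 / r\<^sup>2) * ((z - c) \<bullet> h))))
    (at z)"
proof -
  have "(poly_exp_inv 1 has_derivative (\<lambda>x. poly_exp_inv (pderiv_exp_inv 1) t * x)) (at t)" for t
    using poly_exp_inv_has_real_derivative[of 1 t] unfolding has_field_derivative_def .
  from diff_chain_at[OF has_derivative_bump_profile this] show ?thesis
    by (simp only: o_def bump_def[abs_def])
qed

lemma norm_grad_bump:
  "norm (grad (bump c r) z) = poly_exp_inv (pderiv_exp_inv 1) (1 - (norm (z - c) / r)\<^sup>2) * (2 / r\<^sup>2) * norm (z - c)"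
proof -
  let ?K = "poly_exp_inv (pderiv_exp_inv 1) (1 - ((z - c) \<bullet> (z - c)) / r\<^sup>2) * (- (2 / r\<^sup>2))"
  have "grad (bump c r) z = (\<Sum>b\<in>Basis. (?K * ((z - c) \<bullet> b)) *\<^sub>R b)"
    unfolding grad_def frechet_derivative_at[OF has_derivative_bump, symmetric]
    by (simp only: mult.assoc)
  also have "\<dots> = ?K *\<^sub>R (z - c)"
    by (simp only: scaleR_scaleR[symmetric] scaleR_sum_right[symmetric] euclidean_representation)
  finally show ?thesis
    using poly_exp_inv_pderiv_1_bounds(1) by (simp add: abs_mult inner_self_divide_square)
qed

lemma continuous_on_bump [continuous_intros]: "continuous_on S (bump c r)"
  unfolding bump_def[abs_def] divide_inverse by (intro continuous_intros)

lemma continuous_on_norm_grad_bump [continuous_intros]: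
  "continuous_on S (\<lambda>z. norm (grad (bump c r) z))"
  unfolding norm_grad_bump divide_inverse by (intro continuous_intros)

lemma bump_bounds: "0 \<le> bump c r z" "bump c r z \<le> 1"
  unfolding bump_def using poly_exp_inv_1_bounds by auto

lemma bump_profile_pos_iff:
  assumes "0 < r"
  shows "0 < 1 - (norm (z - c) / r)\<^sup>2 \<longleftrightarrow> z \<in> ball c r"
proof -
  have "0 < 1 - (norm (z - c) / r)\<^sup>2 \<longleftrightarrow> norm (z - c) / r < 1"
    using assms by (simp add: abs_square_less_1)
  also have "\<dots> \<longleftrightarrow> z \<in> ball c r"
    using assms by (simp add: dist_norm norm_minus_commute)
  finally show ?thesis .
qed

lemma bump_support:
  assumes "0 < r"
  shows "{z. bump c r z \<noteq> 0} = ball c r"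
proof (rule set_eqI)
  fix z
  have "bump c r z \<noteq> 0 \<longleftrightarrow> 0 < 1 - (norm (z - c) / r)\<^sup>2"
    by (simp add: bump_def inner_self_divide_square poly_exp_inv_1)
  also have "\<dots> \<longleftrightarrow> z \<in> ball c r"
    by (rule bump_profile_pos_iff[OF assms])
  finally show "z \<in> {z. bump c r z \<noteq> 0} \<longleftrightarrow> z \<in> ball c r"
    by simp
qed

lemma bump_eq_0: "0 < r \<Longrightarrow> z \<notin> ball c r \<Longrightarrow> bump c r z = 0"
  using bump_support by blast

lemma norm_grad_bump_eq_0:
  assumes "0 < r" "z \<notin> ball c r"
  shows "norm (grad (bump c r) z) = 0"
proof -
  have "\<not> 0 < 1 - (norm (z - c) / r)\<^sup>2"
    using bump_profile_pos_iff[OF assms(1)] assms(2) by blast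
  then show ?thesis
    by (simp add: norm_grad_bump poly_exp_inv_pderiv_1)
qed

lemma bump_ge:
  assumes "0 < r" "z \<in> cball c (r / 2)"
  shows "exp (- 4 / 3) \<le> bump c r z"
proof -
  have "norm (z - c) \<le> r / 2"
    using assms(2) by (simp add: dist_norm norm_minus_commute)
  then have "norm (z - c) / r \<le> 1 / 2"
    using assms(1) by (simp add: pos_divide_le_eq)
  then have "(norm (z - c) / r)\<^sup>2 \<le> (1 / 2)\<^sup>2"
    by (rule power_mono) (use assms(1) in simp)
  then have q: "3 / 4 \<le> 1 - (norm (z - c) / r)\<^sup>2"
    by (simp add: power2_eq_square)
  then have "inverse (1 - (norm (z - c) / r)\<^sup>2) \<le> 4 / 3"
    using le_imp_inverse_le[OF q] by simp
  then show ?thesis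
    using q by (simp add: bump_def inner_self_divide_square poly_exp_inv_1)
qed

lemma norm_grad_bump_le:
  assumes "0 < r"
  shows "norm (grad (bump c r) z) \<le> 8 / r"
proof (cases "z \<in> ball c r")
  case True
  then have "norm (z - c) \<le> r"
    by (simp add: dist_norm norm_minus_commute)
  then have "norm (grad (bump c r) z) \<le> 4 * (2 / r\<^sup>2) * r"
    unfolding norm_grad_bump
    using poly_exp_inv_pderiv_1_bounds assms by (intro mult_mono) auto
  then show ?thesis
    using assms by (simp add: power2_eq_square)
next
  case False
  then show ?thesis
    using norm_grad_bump_eq_0[OF assms False] assms by simp
qed

lemma norm_grad_bump_ge:
  assumes "0 < r" "3 / 8 * r \<le> norm (z - c)" "norm (z - c) \<le> 5 / 8 * r"
  shows "3 / 4 * exp (-8) / r \<le> norm (grad (bump c r) z)"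
proof -
  have "norm (z - c) / r \<le> 5 / 8"
    using assms(1,3) by (simp add: pos_divide_le_eq)
  then have "(norm (z - c) / r)\<^sup>2 \<le> (5 / 8)\<^sup>2"
    by (rule power_mono) (use assms(1) in simp)
  moreover have "(5 / 8 :: real)\<^sup>2 = 25 / 64"
    by (simp add: power2_eq_square)
  ultimately have "1 / 8 \<le> 1 - (norm (z - c) / r)\<^sup>2"
    by linarith
  then have "exp (-8) \<le> poly_exp_inv (pderiv_exp_inv 1) (1 - (norm (z - c) / r)\<^sup>2)"
    by (intro poly_exp_inv_pderiv_1_ge) auto
  then have "exp (-8) * (2 / r\<^sup>2) * (3 / 8 * r) \<le> norm (grad (bump c r) z)"
    unfolding norm_grad_bump using assms poly_exp_inv_pderiv_1_bounds(1) by (intro mult_mono) auto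
  moreover have "exp (-8) * (2 / r\<^sup>2) * (3 / 8 * r) = 3 / 4 * exp (-8) / r"
    using assms(1) by (simp add: power2_eq_square)
  ultimately show ?thesis
    by simp
qed

section \<open>Set integrals over compact sets\<close>

lemma set_integral_zero_outside:
  assumes "B \<subseteq> A" "\<And>z. z \<in> A \<Longrightarrow> z \<notin> B \<Longrightarrow> f z = 0"
  shows "(LINT z:A|M. f z) = (LINT z:B|M. f z)"
  unfolding set_lebesgue_integral_def
  using assms by (intro Bochner_Integration.integral_cong) (auto split: split_indicator)

lemma set_integrable_continuous_on_compact:
  fixes f :: "'a::euclidean_space \<Rightarrow> real"
  shows "compact S \<Longrightarrow> continuous_on S f \<Longrightarrow> set_integrable lborel S f"
  unfolding set_integrable_def by (rule borel_integrable_compact)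

lemma set_integral_const_compact:
  fixes S :: "'a::euclidean_space set"
  assumes "compact S"
  shows "(LINT z:S|lborel. m) = measure lborel S * m"
  using assms emeasure_bounded_finite[OF compact_imp_bounded[OF assms]]
  by (simp add: set_integral_const compact_imp_closed)

lemma measure_mult_le_set_integral:
  fixes f :: "'a::euclidean_space \<Rightarrow> real"
  assumes "compact S" "continuous_on S f" "T \<subseteq> S" "compact T"
    and "\<And>z. z \<in> S \<Longrightarrow> 0 \<le> f z" "\<And>z. z \<in> T \<Longrightarrow> m \<le> f z"
  shows "measure lborel T * m \<le> (LINT z:S|lborel. f z)"
proof -
  have int_T: "set_integrable lborel T f"
    using assms(4) continuous_on_subset[OF assms(2,3)] by (rule set_integrable_continuous_on_compact)
  have int_S: "set_integrable lborel S f"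
    using assms(1,2) by (rule set_integrable_continuous_on_compact)
  have "measure lborel T * m = (LINT z:T|lborel. m)"
    using assms(4) by (simp add: set_integral_const_compact)
  also have "\<dots> \<le> (LINT z:T|lborel. f z)"
  proof (rule set_integral_mono[OF _ int_T assms(6)])
    show "set_integrable lborel T (\<lambda>z. m)"
      using assms(4) continuous_on_const by (rule set_integrable_continuous_on_compact)
  qed
  also have "\<dots> \<le> (LINT z:S|lborel. f z)"
    unfolding set_lebesgue_integral_def
  proof (rule integral_mono)
    show "integrable lborel (\<lambda>z. indicator T z *\<^sub>R f z)" "integrable lborel (\<lambda>z. indicator S z *\<^sub>R f z)"
      using int_T int_S by (simp_all add: set_integrable_def)
    show "indicator T z *\<^sub>R f z \<le> indicator S z *\<^sub>R f z" for z
      using assms(3,5) by (auto split: split_indicator)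
  qed
  finally show ?thesis .
qed

lemma set_integral_le_measure_mult:
  fixes f :: "'a::euclidean_space \<Rightarrow> real"
  assumes "compact S" "continuous_on S f" "\<And>z. z \<in> S \<Longrightarrow> f z \<le> M"
  shows "(LINT z:S|lborel. f z) \<le> measure lborel S * M"
proof -
  have "(LINT z:S|lborel. f z) \<le> (LINT z:S|lborel. M)"
  proof (rule set_integral_mono[OF _ _ assms(3)])
    show "set_integrable lborel S f" "set_integrable lborel S (\<lambda>z. M)"
      using assms(1,2) continuous_on_const by (simp_all add: set_integrable_continuous_on_compact)
  qed
  then show ?thesis
    using assms(1) by (simp add: set_integral_const_compact)
qed

lemma measure_cball:
  fixes c :: "'a::euclidean_space"
  assumes "0 \<le> r"
  shows "measure lborel (cball c r) = r ^ DIM('a) * measure lborel (ball (0::'a) 1)"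
  using content_ball_conv_unit_ball[OF assms, of c] by (simp add: content_cball_conv_ball)

section \<open>Bumps near height one in the half space\<close>

lemma open_half_space: "open half_space"
  unfolding half_space_def by (intro open_Collect_less continuous_intros)

lemma snd_bounds_cball:
  fixes x :: "'a::real_normed_vector"
  assumes "z \<in> cball (x, y) r"
  shows "y - r \<le> snd z" "snd z \<le> y + r"
proof -
  have "dist y (snd z) \<le> r"
    using dist_snd_le[of "(x, y)" z] assms by simp
  then show "y - r \<le> snd z" "snd z \<le> y + r"
    by (auto simp: dist_real_def)
qed

lemma snd_pos_cball:
  fixes x :: "'a::real_normed_vector" and z :: "'a \<times> real"
  shows "r < 1 \<Longrightarrow> z \<in> cball (x, 1) r \<Longrightarrow> 0 < snd z"
  using snd_bounds_cball(1)[of z x 1 r] by simp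

lemma cball_subset_half_space: "r < 1 \<Longrightarrow> cball (x, 1) r \<subseteq> half_space"
  using snd_bounds_cball(1) by (fastforce simp: half_space_def)

lemma Cc_infty_01_bump:
  assumes "0 < r" "r < 1"
  shows "Cc_infty_01 half_space (bump (x, 1) r)"
proof -
  have "cball (x, 1) r \<subseteq> half_space"
    by (rule cball_subset_half_space[OF assms(2)])
  then show ?thesis
    unfolding Cc_infty_01_def smooth_on_def bump_support[OF assms(1)] closure_ball[OF assms(1)]
    using C_k_on_bump[OF open_half_space, of _ "(x, 1)" r] bump_bounds[of "(x, 1)" r] by auto
qed

lemma snd_powr_bounds_cball:
  fixes x :: "'a::real_normed_vector" and a :: real
  assumes "a \<le> 0" "r \<le> 1 / 2" "z \<in> cball (x, 1) r"
  shows "2 powr a \<le> snd z powr a" "snd z powr a \<le> (1 / 2) powr a"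
  using snd_bounds_cball[of z x 1 r] assms by (auto intro!: powr_mono2')

lemma continuous_on_snd_powr:
  fixes S :: "('a::topological_space \<times> real) set" and a :: real
  assumes "\<And>z. z \<in> S \<Longrightarrow> 0 < snd z"
  shows "continuous_on S (\<lambda>z. snd z powr a)"
proof -
  have "\<forall>z\<in>S. snd z \<noteq> 0"
    using assms by force
  then show ?thesis
    by (intro continuous_on_powr continuous_intros)
qed

lemma set_integral_half_space_eq_cball:
  fixes x :: "real^'n"
  assumes "r < 1" "\<And>z. z \<notin> cball (x, 1) r \<Longrightarrow> g z = 0"
  shows "(LINT z:half_space|lborel. g z) = (LINT z:cball (x, 1) r|lborel. g z)"
  using assms by (intro set_integral_zero_outside cball_subset_half_space) auto

lemma weighted_Lp_integral_bump_eq_cball: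
  fixes x :: "real^'n" and a p r :: real
  assumes "0 < r" "r < 1"
  shows "(LINT z:half_space|lborel. snd z powr a * \<bar>bump (x, 1) r z\<bar> powr p)
    = (LINT z:cball (x, 1) r|lborel. snd z powr a * \<bar>bump (x, 1) r z\<bar> powr p)"
proof (rule set_integral_half_space_eq_cball[OF assms(2)])
  show "snd z powr a * \<bar>bump (x, 1) r z\<bar> powr p = 0" if "z \<notin> cball (x, 1) r" for z
  proof -
    have "z \<notin> ball (x, 1) r"
      using that by auto
    then show ?thesis
      by (simp add: bump_eq_0[OF assms(1)])
  qed
qed

lemma continuous_on_weighted_Lp_integrand_bump:
  fixes x :: "real^'n" and a p r :: real
  assumes "0 < p" "r < 1"
  shows "continuous_on (cball (x, 1) r) (\<lambda>z. snd z powr a * \<bar>bump (x, 1) r z\<bar> powr p)"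
proof (intro continuous_on_mult continuous_on_snd_powr)
  show "0 < snd z" if "z \<in> cball (x, 1) r" for z :: "(real^'n) \<times> real"
    using that assms snd_pos_cball[of r z x] by auto
  show "continuous_on (cball (x, 1) r) (\<lambda>z. \<bar>bump (x, 1) r z\<bar> powr p)"
    using assms(1) by (intro continuous_on_powr' continuous_intros) auto
qed

lemma weighted_Lp_integral_bump_ge:
  fixes x :: "real^'n" and a p r :: real
  assumes "a \<le> 0" "0 < p" "0 < r" "r \<le> 1 / 2"
  shows "measure lborel (cball (x, 1::real) (r / 2)) * (2 powr a * exp (- 4 / 3) powr p)
    \<le> (LINT z:half_space|lborel. snd z powr a * \<bar>bump (x, 1) r z\<bar> powr p)"
proof -
  have "measure lborel (cball (x, 1::real) (r / 2)) * (2 powr a * exp (- 4 / 3) powr p)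
      \<le> (LINT z:cball (x, 1) r|lborel. snd z powr a * \<bar>bump (x, 1) r z\<bar> powr p)"
  proof (rule measure_mult_le_set_integral)
    show "continuous_on (cball (x, 1) r) (\<lambda>z. snd z powr a * \<bar>bump (x, 1) r z\<bar> powr p)"
      using assms by (intro continuous_on_weighted_Lp_integrand_bump) auto
    show "cball (x, 1) (r / 2) \<subseteq> cball (x, 1) r"
      using assms by (intro subset_cball) simp
    show "2 powr a * exp (- 4 / 3) powr p \<le> snd z powr a * \<bar>bump (x, 1) r z\<bar> powr p"
      if "z \<in> cball (x, 1) (r / 2)" for z
    proof (rule mult_mono)
      show "2 powr a \<le> snd z powr a"
        using snd_powr_bounds_cball(1)[of a "r / 2" z x] that assms by auto
      show "exp (- 4 / 3) powr p \<le> \<bar>bump (x, 1) r z\<bar> powr p"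
        using bump_ge[OF assms(3) that] assms(2) by (intro powr_mono2) auto
    qed simp_all
    show "0 \<le> snd z powr a * \<bar>bump (x, 1) r z\<bar> powr p" for z
      by simp
  qed simp_all
  also have "\<dots> = (LINT z:half_space|lborel. snd z powr a * \<bar>bump (x, 1) r z\<bar> powr p)"
    using assms by (intro weighted_Lp_integral_bump_eq_cball[symmetric]) auto
  finally show ?thesis .
qed

lemma weighted_Dirichlet_integral_bump_eq_cball:
  fixes x :: "real^'n" and a r :: real
  assumes "0 < r" "r < 1"
  shows "(LINT z:half_space|lborel. snd z powr a * (norm (grad (bump (x, 1) r) z))\<^sup>2)
    = (LINT z:cball (x, 1) r|lborel. snd z powr a * (norm (grad (bump (x, 1) r) z))\<^sup>2)"
proof (rule set_integral_half_space_eq_cball[OF assms(2)])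
  show "snd z powr a * (norm (grad (bump (x, 1) r) z))\<^sup>2 = 0" if "z \<notin> cball (x, 1) r" for z
  proof -
    have "z \<notin> ball (x, 1) r"
      using that by auto
    then show ?thesis
      by (simp add: norm_grad_bump_eq_0[OF assms(1)])
  qed
qed

lemma continuous_on_weighted_Dirichlet_integrand_bump:
  fixes x :: "real^'n" and a r :: real
  assumes "r < 1"
  shows "continuous_on (cball (x, 1) r) (\<lambda>z. snd z powr a * (norm (grad (bump (x, 1) r) z))\<^sup>2)"
proof (intro continuous_on_mult continuous_on_snd_powr continuous_on_power continuous_on_norm_grad_bump)
  show "0 < snd z" if "z \<in> cball (x, 1) r" for z :: "(real^'n) \<times> real"
    using that assms snd_pos_cball[of r z x] by auto
qed

lemma weighted_Dirichlet_integral_bump_le: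
  fixes x :: "real^'n" and a r :: real
  assumes "a \<le> 0" "0 < r" "r \<le> 1 / 2"
  shows "(LINT z:half_space|lborel. snd z powr a * (norm (grad (bump (x, 1) r) z))\<^sup>2)
    \<le> measure lborel (cball (x, 1::real) r) * ((1 / 2) powr a * (8 / r)\<^sup>2)"
proof -
  have "(LINT z:half_space|lborel. snd z powr a * (norm (grad (bump (x, 1) r) z))\<^sup>2)
      = (LINT z:cball (x, 1) r|lborel. snd z powr a * (norm (grad (bump (x, 1) r) z))\<^sup>2)"
    using assms by (intro weighted_Dirichlet_integral_bump_eq_cball) auto
  also have "\<dots> \<le> measure lborel (cball (x, 1::real) r) * ((1 / 2) powr a * (8 / r)\<^sup>2)"
  proof (rule set_integral_le_measure_mult)
    show "continuous_on (cball (x, 1) r) (\<lambda>z. snd z powr a * (norm (grad (bump (x, 1) r) z))\<^sup>2)"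
      using assms by (intro continuous_on_weighted_Dirichlet_integrand_bump) auto
    show "snd z powr a * (norm (grad (bump (x, 1) r) z))\<^sup>2 \<le> (1 / 2) powr a * (8 / r)\<^sup>2"
      if "z \<in> cball (x, 1) r" for z
    proof (rule mult_mono)
      show "snd z powr a \<le> (1 / 2) powr a"
        using snd_powr_bounds_cball(2)[of a r z x] that assms by auto
      show "(norm (grad (bump (x, 1) r) z))\<^sup>2 \<le> (8 / r)\<^sup>2"
        using norm_grad_bump_le[OF assms(2)] by (intro power_mono) auto
    qed simp_all
  qed simp
  finally show ?thesis .
qed

lemma weighted_Dirichlet_integral_bump_pos:
  fixes x :: "real^'n" and a r :: real
  assumes "a \<le> 0" "0 < r" "r \<le> 1 / 2"
  shows "0 < (LINT z:half_space|lborel. snd z powr a * (norm (grad (bump (x, 1) r) z))\<^sup>2)"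
proof -
  let ?c = "(x, 1)" and ?w = "(x, 1 + r / 2)"
  have dist_cw: "dist ?c ?w = r / 2"
    using assms by (simp add: dist_Pair_Pair dist_real_def)
  have annulus: "3 / 8 * r \<le> dist ?c z \<and> dist ?c z \<le> 5 / 8 * r" if "z \<in> cball ?w (r / 8)" for z
    using that dist_triangle[of ?c z ?w] dist_triangle[of ?c ?w z] dist_cw by (simp add: dist_commute)
  let ?m = "2 powr a * (3 / 4 * exp (-8) / r)\<^sup>2"
  have "0 < measure lborel (cball ?w (r / 8)) * ?m"
    using content_cball_pos[of "r / 8" ?w] assms(2) by simp
  also have "\<dots> \<le> (LINT z:cball ?c r|lborel. snd z powr a * (norm (grad (bump ?c r) z))\<^sup>2)"
  proof (rule measure_mult_le_set_integral)
    show "continuous_on (cball ?c r) (\<lambda>z. snd z powr a * (norm (grad (bump ?c r) z))\<^sup>2)"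
      using assms by (intro continuous_on_weighted_Dirichlet_integrand_bump) simp
    show sub: "cball ?w (r / 8) \<subseteq> cball ?c r"
    proof
      fix z
      assume "z \<in> cball ?w (r / 8)"
      then show "z \<in> cball ?c r"
        using annulus[of z] assms(2) by simp
    qed
    show "?m \<le> snd z powr a * (norm (grad (bump ?c r) z))\<^sup>2" if "z \<in> cball ?w (r / 8)" for z
    proof (rule mult_mono)
      show "2 powr a \<le> snd z powr a"
        using snd_powr_bounds_cball(1)[of a r z x] that sub assms by auto
      show "(3 / 4 * exp (-8) / r)\<^sup>2 \<le> (norm (grad (bump ?c r) z))\<^sup>2"
        using annulus[OF that] assms(2)
        by (intro power_mono norm_grad_bump_ge) (auto simp: dist_norm norm_minus_commute)
    qed simp_all
    show "0 \<le> snd z powr a * (norm (grad (bump ?c r) z))\<^sup>2" for z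
      by simp
  qed simp_all
  also have "\<dots> = (LINT z:half_space|lborel. snd z powr a * (norm (grad (bump ?c r) z))\<^sup>2)"
    using assms by (intro weighted_Dirichlet_integral_bump_eq_cball[symmetric]) auto
  finally show ?thesis .
qed

section \<open>Scaling of the weighted Sobolev quotient\<close>

lemma supercritical_exponent:
  fixes N s :: real
  assumes "2 \<le> N" "1 / 2 < s" "s < 1"
  shows "(N + 1) / (2 * (1 + 2 / (N - 2 * s))) < (N - 1) / 2"
proof -
  have gap: "0 < N - 2 * s"
    using assms by simp
  have "(N - 1) / 2 - (N + 1) / (2 * (1 + 2 / (N - 2 * s))) = (2 * s - 1) / (N - 2 * s + 2)"
    using gap by (simp add: field_simps)
  moreover have "0 < (2 * s - 1) / (N - 2 * s + 2)"
    using gap assms(2) by simp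
  ultimately show ?thesis
    by linarith
qed

lemma powr_quotient_ge:
  fixes \<alpha> \<beta> r p D N G :: real
  assumes "0 < \<alpha>" "0 < \<beta>" "0 < r" "0 < p"
    and "\<alpha> * r powr D \<le> N" "0 < G" "G \<le> \<beta> * r powr (D - 2)"
  shows "\<alpha> powr (1 / p) / \<beta> powr (1 / 2) * r powr (D / p - (D - 2) / 2) \<le> N powr (1 / p) / G powr (1 / 2)"
proof -
  have "\<alpha> powr (1 / p) * r powr (D / p) = (\<alpha> * r powr D) powr (1 / p)"
    using assms by (simp add: powr_mult powr_powr)
  also have "\<dots> \<le> N powr (1 / p)"
    using assms by (intro powr_mono2) auto
  finally have num: "\<alpha> powr (1 / p) * r powr (D / p) \<le> N powr (1 / p)" .
  have "G powr (1 / 2) \<le> (\<beta> * r powr (D - 2)) powr (1 / 2)"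
    using assms by (intro powr_mono2) auto
  also have "\<dots> = \<beta> powr (1 / 2) * r powr ((D - 2) / 2)"
    using assms by (simp add: powr_mult powr_powr)
  finally have den: "G powr (1 / 2) \<le> \<beta> powr (1 / 2) * r powr ((D - 2) / 2)" .
  have "\<alpha> powr (1 / p) / \<beta> powr (1 / 2) * r powr (D / p - (D - 2) / 2)
      = (\<alpha> powr (1 / p) * r powr (D / p)) / (\<beta> powr (1 / 2) * r powr ((D - 2) / 2))"
    by (simp add: powr_diff)
  also have "\<dots> \<le> N powr (1 / p) / G powr (1 / 2)"
    using num den assms by (intro frac_le) auto
  finally show ?thesis .
qed

lemma weighted_Sobolev_quotient_bump_ge:
  fixes x :: "real^'n" and a p :: real
  assumes "a \<le> 0" "0 < p"
  obtains C where "0 < C"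
    and "\<And>r. 0 < r \<Longrightarrow> r \<le> 1 / 2 \<Longrightarrow>
      C * r powr ((real CARD('n) + 1) / p - (real CARD('n) - 1) / 2)
      \<le> (LINT z:half_space|lborel. snd z powr a * \<bar>bump (x, 1) r z\<bar> powr p) powr (1 / p)
        / (LINT z:half_space|lborel. snd z powr a * (norm (grad (bump (x, 1) r) z))\<^sup>2) powr (1 / 2)"
proof -
  define D where "D = real CARD('n) + 1"
  define V where "V = measure lborel (ball (0 :: (real^'n) \<times> real) 1)"
  define \<alpha> where "\<alpha> = (1 / 2) ^ (CARD('n) + 1) * V * (2 powr a * exp (- 4 / 3) powr p)"
  define \<beta> where "\<beta> = V * ((1 / 2) powr a * 64)"
  have "0 < V"
    unfolding V_def by (rule content_ball_pos) simp
  then have "0 < \<alpha>" "0 < \<beta>"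
    by (simp_all add: \<alpha>_def \<beta>_def)
  have pow: "\<rho> ^ (CARD('n) + 1) = \<rho> powr D" if "0 < \<rho>" for \<rho> :: real
    unfolding D_def using powr_realpow[OF that, of "CARD('n) + 1"] by (simp add: add.commute)
  show ?thesis
  proof (rule that)
    show "0 < \<alpha> powr (1 / p) / \<beta> powr (1 / 2)"
      using \<open>0 < \<alpha>\<close> \<open>0 < \<beta>\<close> by simp
    fix r :: real
    assume r: "0 < r" "r \<le> 1 / 2"
    have "\<alpha> * r powr D = measure lborel (cball (x, 1::real) (r / 2)) * (2 powr a * exp (- 4 / 3) powr p)"
      using r by (simp add: measure_cball V_def \<alpha>_def pow[symmetric] power_mult_distrib power_divide)
    also have "\<dots> \<le> (LINT z:half_space|lborel. snd z powr a * \<bar>bump (x, 1) r z\<bar> powr p)"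
      by (rule weighted_Lp_integral_bump_ge[OF assms r])
    finally have N: "\<alpha> * r powr D \<le> \<dots>" .
    have "(LINT z:half_space|lborel. snd z powr a * (norm (grad (bump (x, 1) r) z))\<^sup>2)
        \<le> measure lborel (cball (x, 1::real) r) * ((1 / 2) powr a * (8 / r)\<^sup>2)"
      by (rule weighted_Dirichlet_integral_bump_le[OF assms(1) r])
    also have "\<dots> = \<beta> * r powr (D - 2)"
      using r by (simp add: measure_cball V_def \<beta>_def pow[symmetric] powr_diff power2_eq_square field_simps)
    finally have G: "(LINT z:half_space|lborel. snd z powr a * (norm (grad (bump (x, 1) r) z))\<^sup>2)
        \<le> \<beta> * r powr (D - 2)" .
    have "D / p - (D - 2) / 2 = (real CARD('n) + 1) / p - (real CARD('n) - 1) / 2"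
      by (simp add: D_def)
    with powr_quotient_ge[OF \<open>0 < \<alpha>\<close> \<open>0 < \<beta>\<close> r(1) assms(2) N
        weighted_Dirichlet_integral_bump_pos[OF assms(1) r] G]
    show "\<alpha> powr (1 / p) / \<beta> powr (1 / 2) * r powr ((real CARD('n) + 1) / p - (real CARD('n) - 1) / 2)
      \<le> (LINT z:half_space|lborel. snd z powr a * \<bar>bump (x, 1) r z\<bar> powr p) powr (1 / p)
        / (LINT z:half_space|lborel. snd z powr a * (norm (grad (bump (x, 1) r) z))\<^sup>2) powr (1 / 2)"
      by simp
  qed
qed

lemma weighted_Sobolev_quotient_bump_tendsto_infinity:
  fixes x :: "real^'n" and a p :: real
  assumes "a \<le> 0" "0 < p" "(real CARD('n) + 1) / p < (real CARD('n) - 1) / 2"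
  shows "filterlim (\<lambda>n.
      (LINT z:half_space|lborel. snd z powr a * \<bar>bump (x, 1) (1 / (real n + 2)) z\<bar> powr p) powr (1 / p)
      / (LINT z:half_space|lborel. snd z powr a * (norm (grad (bump (x, 1) (1 / (real n + 2))) z))\<^sup>2)
          powr (1 / 2))
    at_top sequentially"
proof -
  let ?Q = "\<lambda>r. (LINT z:half_space|lborel. snd z powr a * \<bar>bump (x, 1) r z\<bar> powr p) powr (1 / p)
    / (LINT z:half_space|lborel. snd z powr a * (norm (grad (bump (x, 1) r) z))\<^sup>2) powr (1 / 2)"
  let ?k = "(real CARD('n) + 1) / p - (real CARD('n) - 1) / 2"
  obtain C where "0 < C" and bound: "\<And>r. 0 < r \<Longrightarrow> r \<le> 1 / 2 \<Longrightarrow> C * r powr ?k \<le> ?Q r"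
    using weighted_Sobolev_quotient_bump_ge[OF assms(1,2)] by blast
  have "0 < - ?k"
    using assms(3) by simp
  have "filterlim (\<lambda>n. C * (real n + 2) powr (- ?k)) at_top sequentially"
  proof (rule filterlim_tendsto_pos_mult_at_top[OF tendsto_const \<open>0 < C\<close>])
    have "filterlim (\<lambda>n. real n + 2) at_top sequentially"
      by real_asymp
    then show "filterlim (\<lambda>n. (real n + 2) powr (- ?k)) at_top sequentially"
      by (rule filterlim_compose[OF real_powr_at_top[OF \<open>0 < - ?k\<close>]])
  qed
  then show ?thesis
  proof (rule filterlim_at_top_mono[OF _ always_eventually, rule_format])
    fix n :: nat
    have r: "0 < 1 / (real n + 2)" "1 / (real n + 2) \<le> 1 / 2"
      by (simp_all add: field_simps)
    have "(1 / (real n + 2)) powr ?k = (real n + 2) powr (- ?k)"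
      by (simp add: powr_divide powr_minus_divide del: minus_diff_eq)
    then show "C * (real n + 2) powr (- ?k) \<le> ?Q (1 / (real n + 2))"
      using bound[OF r] by simp
  qed
qed

theorem lemmaA1:
  fixes s :: real
  assumes "CARD('n) \<ge> 2"
    and "1/2 < s" and "s < 1"
  shows "\<exists>U :: nat \<Rightarrow> (real^'n) \<times> real \<Rightarrow> real.
    (\<forall>n. Cc_infty_01 half_space (U n)) \<and>
    filterlim (\<lambda>n.
       (set_lebesgue_integral lborel half_space
          (\<lambda>z. snd z powr (1 - 2 * s) * abs (U n z) powr (2 * (1 + 2 / (real CARD('n) - 2 * s)))))
         powr (1 / (2 * (1 + 2 / (real CARD('n) - 2 * s))))
       / (set_lebesgue_integral lborel half_space
          (\<lambda>z. snd z powr (1 - 2 * s) * (norm (grad (U n) z))\<^sup>2)) powr (1/2))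
      at_top sequentially"
proof -
  define p where "p = 2 * (1 + 2 / (real CARD('n) - 2 * s))"
  have "0 < p"
    using assms by (simp add: p_def add_pos_pos)
  have gap_p: "(real CARD('n) + 1) / p < (real CARD('n) - 1) / 2"
    unfolding p_def using assms by (intro supercritical_exponent) auto
  have "filterlim (\<lambda>n.
      (LINT z:half_space|lborel. snd z powr (1 - 2 * s) * \<bar>bump (0 :: real^'n, 1) (1 / (real n + 2)) z\<bar> powr p) powr (1 / p)
      / (LINT z:half_space|lborel. snd z powr (1 - 2 * s) * (norm (grad (bump (0 :: real^'n, 1) (1 / (real n + 2))) z))\<^sup>2)
          powr (1 / 2))
    at_top sequentially"
    by (rule weighted_Sobolev_quotient_bump_tendsto_infinity[OF _ \<open>0 < p\<close> gap_p]) (use assms(2) in simp)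
  moreover have "Cc_infty_01 half_space (bump (0 :: real^'n, 1) (1 / (real n + 2)))" for n
    by (rule Cc_infty_01_bump) (simp_all add: field_simps)
  ultimately show ?thesis
    unfolding p_def[symmetric] by (intro exI[of _ "\<lambda>n. bump (0, 1) (1 / (real n + 2))"] conjI allI)
qed

end
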